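(* Let $\mathcal A$ be an NBA and let $R$ be a strict partial order on its states with $R\subseteq\ \subseteq^{\mathrm{bw\text{-}di}}$. Then $P(R,\mathrm{id})$ is good for pruning, i.e. $\mathcal L(\mathrm{Prune}(\mathcal A,P(R,\mathrm{id})))=\mathcal L(\mathcal A)$. In particular this holds for $R$ the strict part of backward direct trace inclusion.
   Context: An NBA is $\mathcal A=(\Sigma,Q,I,F,\delta)$, $\delta\subseteq Q\times\Sigma\times Q$, assumed forward and backward complete; initial traces start in $I$, fair traces are infinite and visit $F$ infinitely often, the language is the set of infinite words with an initial fair trace. Backward direct trace inclusion: $p\subseteq^{\mathrm{bw\text{-}di}}q$ iff for every finite word $\sigma_0\cdots\sigma_{m-1}$ and every initial finite trace $p_0\xrightarrow{\sigma_0}\cdots\xrightarrow{\sigma_{m-1}}p_m=p$ there is an initial finite trace $q_0\xrightarrow{\sigma_0}\cdots\xrightarrow{\sigma_{m-1}}q_m=q$ with $p_i\in F\Rightarrow q_i\in F$ for all $0\le i\le m$. Strict part: $p\subseteq q$ and not $q\subseteq p$. For $P\subseteq\delta\times\delta$, $\mathrm{Prune}(\mathcal A,P)$ has transition set $\{t\in\delta:\nexists t'\in\delta,\ (t,t')\in P\}$. For $R_b,R_f\subseteq Q\times Q$, $P(R_b,R_f)=\{((p,\sigma,r),(p',\sigma,r'))\in\delta\times\delta:p\,R_b\,p',\ r\,R_f\,r'\}$; $\mathrm{id}$ is the identity relation. *)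

theory Defs
  imports Main
begin

record ('a, 's) nba =
  alph   :: "'a set"
  states :: "'s set"
  init   :: "'s set"
  acc    :: "'s set"
  delta  :: "('s \<times> 'a \<times> 's) set"

definition nba_wf :: "('a, 's) nba \<Rightarrow> bool" where
  "nba_wf A \<longleftrightarrow> finite (alph A) \<and> finite (states A)
     \<and> init A \<subseteq> states A \<and> acc A \<subseteq> states A
     \<and> delta A \<subseteq> states A \<times> alph A \<times> states A
     \<and> (\<forall>p\<in>states A. \<forall>a\<in>alph A. \<exists>q. (p, a, q) \<in> delta A)
     \<and> (\<forall>q\<in>states A. \<forall>a\<in>alph A. \<exists>p. (p, a, q) \<in> delta A)"

definition lang :: "('a, 's) nba \<Rightarrow> (nat \<Rightarrow> 'a) set" where
  "lang A = {w. \<exists>r. r 0 \<in> init A \<and> (\<forall>i. (r i, w i, r (Suc i)) \<in> delta A)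
                   \<and> (\<exists>\<^sub>\<infinity>i. r i \<in> acc A)}"

definition init_trace :: "('a, 's) nba \<Rightarrow> nat \<Rightarrow> (nat \<Rightarrow> 'a) \<Rightarrow> (nat \<Rightarrow> 's) \<Rightarrow> bool" where
  "init_trace A m w r \<longleftrightarrow> r 0 \<in> init A \<and> (\<forall>i<m. (r i, w i, r (Suc i)) \<in> delta A)"

definition bw_di :: "('a, 's) nba \<Rightarrow> ('s \<times> 's) set" where
  "bw_di A = {(p, q). \<forall>m w ps. init_trace A m w ps \<and> ps m = p \<longrightarrow>
      (\<exists>qs. init_trace A m w qs \<and> qs m = q \<and>
            (\<forall>i\<le>m. ps i \<in> acc A \<longrightarrow> qs i \<in> acc A))}"

definition strict_part :: "('s \<times> 's) set \<Rightarrow> ('s \<times> 's) set" where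
  "strict_part R = {(p, q). (p, q) \<in> R \<and> (q, p) \<notin> R}"

definition prune :: "('a, 's) nba \<Rightarrow> (('s \<times> 'a \<times> 's) \<times> ('s \<times> 'a \<times> 's)) set \<Rightarrow> ('a, 's) nba" where
  "prune A P = A\<lparr>delta := {t \<in> delta A. \<not> (\<exists>t'\<in>delta A. (t, t') \<in> P)}\<rparr>"

definition prel :: "('a, 's) nba \<Rightarrow> ('s \<times> 's) set \<Rightarrow> ('s \<times> 's) set
    \<Rightarrow> (('s \<times> 'a \<times> 's) \<times> ('s \<times> 'a \<times> 's)) set" where
  "prel A Rb Rf = {((p, a, r), (p', a', r')).
      (p, a, r) \<in> delta A \<and> (p', a', r') \<in> delta A \<and> a = a'
      \<and> (p, p') \<in> Rb \<and> (r, r') \<in> Rf}"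

end

theory Submission
  imports Defs
begin

text \<open>Every transition (p, a, r) of the automaton is matched by an unpruned transition
  (p', a, r) with p' equal to p or R-above it: take p' R-maximal among such sources (the state
  space is finite and R is a strict order). Since p is backward direct trace included in p',
  every initial trace ending in p can be rerouted to end in p' without losing accepting
  positions, so by induction every finite initial trace of the automaton is dominated by one of
  the pruned automaton with the same endpoint. A Koenig-style compactness argument turns the
  finite dominating traces of the prefixes of an accepting run into an infinite one, which is
  then fair.\<close>

context
  fixes good :: "nat \<Rightarrow> (nat \<Rightarrow> 'b) \<Rightarrow> bool" and S :: "'b set"
  assumes finite_S: "finite S"
    and good_exists: "\<And>n. \<exists>xs. good n xs"
    and good_mono: "\<And>m n xs. good n xs \<Longrightarrow> m \<le> n \<Longrightarrow> good m xs"
    and good_local: "\<And>n xs ys. good n xs \<Longrightarrow> (\<And>i. i \<le> n \<Longrightarrow> ys i = xs i) \<Longrightarrow> good n ys"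
    and good_range: "\<And>n xs. good (Suc n) xs \<Longrightarrow> xs n \<in> S"
begin

definition extendable :: "nat \<Rightarrow> (nat \<Rightarrow> 'b) \<Rightarrow> bool" where
  "extendable m xs \<longleftrightarrow> (\<forall>n\<ge>m. \<exists>ys. good n ys \<and> (\<forall>i<m. ys i = xs i))"

lemma extendable_step:
  assumes "extendable m xs"
  shows "\<exists>s. extendable (Suc m) (xs(m := s))"
proof (rule ccontr)
  assume "\<nexists>s. extendable (Suc m) (xs(m := s))"
  then have "\<forall>s. \<exists>n\<ge>Suc m. \<forall>ys. good n ys \<longrightarrow> (\<exists>i<Suc m. ys i \<noteq> (xs(m := s)) i)"
    unfolding extendable_def by blast
  then obtain bound where bound: "\<And>s. bound s \<ge> Suc m"
    "\<And>s ys. good (bound s) ys \<Longrightarrow> \<exists>i<Suc m. ys i \<noteq> (xs(m := s)) i"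
    by metis
  define N where "N = Max (insert (Suc m) (bound ` S))"
  have bound_le_N: "bound s \<le> N" if "s \<in> S" for s
    unfolding N_def using finite_S that by simp
  have "Suc m \<le> N"
    unfolding N_def using finite_S by simp
  then obtain ys where ys: "good N ys" "\<forall>i<m. ys i = xs i"
    using assms unfolding extendable_def by (meson Suc_leD)
  have "ys m \<in> S"
    using good_range good_mono[OF ys(1) \<open>Suc m \<le> N\<close>] by blast
  then have "good (bound (ys m)) ys"
    using good_mono[OF ys(1) bound_le_N] by blast
  then show False
    using bound(2)[of "ys m" ys] ys(2) by (auto simp: less_Suc_eq)
qed

lemma koenig_limit: "\<exists>xs. \<forall>n. good n xs"
proof -
  have "\<exists>f. \<forall>n. extendable n (f n) \<and> (\<forall>i<n. f (Suc n) i = f n i)"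
  proof (rule dependent_nat_choice)
    show "\<exists>xs. extendable 0 xs"
      using good_exists unfolding extendable_def by blast
    show "\<exists>ys. extendable (Suc n) ys \<and> (\<forall>i<n. ys i = xs i)" if "extendable n xs" for xs n
      using extendable_step[OF that] by force
  qed
  then obtain f where f: "\<And>n. extendable n (f n)" "\<And>n i. i < n \<Longrightarrow> f (Suc n) i = f n i"
    by blast
  have stable: "f k i = f (Suc i) i" if "Suc i \<le> k" for i k
    using that by (induction k rule: dec_induct) (auto simp: f(2))
  have "good n (\<lambda>i. f (Suc i) i)" for n
  proof -
    obtain ys where ys: "good (Suc n) ys" "\<forall>i<Suc n. ys i = f (Suc n) i"
      using f(1)[of "Suc n"] unfolding extendable_def by blast
    have "f (Suc i) i = ys i" if "i \<le> n" for i
      using ys(2) stable[of i "Suc n"] that by simp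
    then show ?thesis
      using good_local[OF good_mono[OF ys(1)]] by simp
  qed
  then show ?thesis by blast
qed

end

lemma finite_has_maximal_wrt_strict_order:
  assumes "finite M" "M \<noteq> {}" "irrefl R" "trans R"
  shows "\<exists>x\<in>M. \<forall>y\<in>M. (x, y) \<notin> R"
  using assms(1,2)
proof (induction M rule: finite_ne_induct)
  case (singleton x)
  then show ?case using \<open>irrefl R\<close> by (simp add: irrefl_def)
next
  case (insert x F)
  then obtain m where m: "m \<in> F" "\<forall>y\<in>F. (m, y) \<notin> R" by blast
  show ?case
  proof (cases "(m, x) \<in> R")
    case True
    then have "\<forall>y\<in>insert x F. (x, y) \<notin> R"
      using m(2) \<open>irrefl R\<close> \<open>trans R\<close> by (auto simp: irrefl_def dest: transD)
    then show ?thesis by blast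
  next
    case False
    then show ?thesis using m by blast
  qed
qed

lemma prune_simps [simp]:
  "init (prune A P) = init A" "acc (prune A P) = acc A"
  "delta (prune A P) = {t \<in> delta A. \<not> (\<exists>t'\<in>delta A. (t, t') \<in> P)}"
  unfolding prune_def by simp_all

lemma lang_prune_subset: "lang (prune A P) \<subseteq> lang A"
  unfolding lang_def by auto

lemma bw_di_refl: "(p, p) \<in> bw_di A"
  unfolding bw_di_def by blast

lemma bw_diD:
  assumes "(p, q) \<in> bw_di A" "init_trace A m w ps" "ps m = p"
  shows "\<exists>qs. init_trace A m w qs \<and> qs m = q \<and> (\<forall>i\<le>m. ps i \<in> acc A \<longrightarrow> qs i \<in> acc A)"
  using assms unfolding bw_di_def by blast

lemma trans_bw_di: "trans (bw_di A)"
proof (rule transI)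
  fix p q s assume pq: "(p, q) \<in> bw_di A" and qs: "(q, s) \<in> bw_di A"
  have "\<exists>ss. init_trace A m w ss \<and> ss m = s \<and> (\<forall>i\<le>m. ps i \<in> acc A \<longrightarrow> ss i \<in> acc A)"
    if ps: "init_trace A m w ps" "ps m = p" for m w ps
  proof -
    obtain qs' where qs': "init_trace A m w qs'" "qs' m = q"
      "\<forall>i\<le>m. ps i \<in> acc A \<longrightarrow> qs' i \<in> acc A"
      using bw_diD[OF pq ps] by blast
    obtain ss where "init_trace A m w ss" "ss m = s" "\<forall>i\<le>m. qs' i \<in> acc A \<longrightarrow> ss i \<in> acc A"
      using bw_diD[OF qs qs'(1,2)] by blast
    then show ?thesis
      using qs'(3) by blast
  qed
  then show "(p, s) \<in> bw_di A"
    by (simp add: bw_di_def)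
qed

lemma irrefl_strict_part: "irrefl (strict_part R)"
  unfolding irrefl_def strict_part_def by auto

lemma trans_strict_part:
  assumes "trans R"
  shows "trans (strict_part R)"
  using assms unfolding trans_def strict_part_def by blast

lemma strict_part_subset: "strict_part R \<subseteq> R"
  unfolding strict_part_def by auto

lemma init_trace_extend:
  assumes "init_trace A n w qs" "(qs n, w n, p) \<in> delta A"
  shows "init_trace A (Suc n) w (qs(Suc n := p))"
  using assms unfolding init_trace_def by (auto simp: less_Suc_eq)

lemma init_trace_mono:
  assumes "init_trace A n w qs" "m \<le> n"
  shows "init_trace A m w qs"
  using assms unfolding init_trace_def by simp

lemma init_trace_cong:
  assumes "init_trace A n w qs" "\<And>i. i \<le> n \<Longrightarrow> qs' i = qs i"
  shows "init_trace A n w qs'"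
  using assms unfolding init_trace_def by simp

lemma init_trace_prune:
  assumes "init_trace (prune A P) n w qs"
  shows "init_trace A n w qs"
  using assms unfolding init_trace_def by simp

lemma init_trace_in_states:
  assumes "nba_wf A" "init_trace A (Suc n) w qs"
  shows "qs n \<in> states A"
proof -
  have "(qs n, w n, qs (Suc n)) \<in> delta A"
    using assms(2) unfolding init_trace_def by simp
  then show ?thesis
    using assms(1) unfolding nba_wf_def by blast
qed

lemma unpruned_transition_above:
  assumes "nba_wf A" "irrefl R" "trans R" "(p, a, r) \<in> delta A"
  shows "\<exists>p'. (p, p') \<in> R\<^sup>= \<and> (p', a, r) \<in> delta (prune A (prel A R Id))"
proof -
  define M where "M = {p'. (p', a, r) \<in> delta A \<and> (p, p') \<in> R\<^sup>=}"
  have "delta A \<subseteq> states A \<times> alph A \<times> states A" "finite (states A)"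
    using \<open>nba_wf A\<close> unfolding nba_wf_def by blast+
  then have "M \<subseteq> states A"
    unfolding M_def by blast
  then have "finite M"
    using \<open>finite (states A)\<close> finite_subset by blast
  moreover have "p \<in> M"
    unfolding M_def using assms(4) by simp
  ultimately obtain p' where p': "p' \<in> M" "\<forall>p''\<in>M. (p', p'') \<notin> R"
    using finite_has_maximal_wrt_strict_order[OF _ _ \<open>irrefl R\<close> \<open>trans R\<close>] by blast
  have "\<not> (\<exists>t'\<in>delta A. ((p', a, r), t') \<in> prel A R Id)"
  proof
    assume "\<exists>t'\<in>delta A. ((p', a, r), t') \<in> prel A R Id"
    then obtain p'' where "(p'', a, r) \<in> delta A" "(p', p'') \<in> R"
      unfolding prel_def by auto
    then have "p'' \<in> M"
      using p'(1) \<open>trans R\<close> unfolding M_def by (auto dest: transD)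
    then show False
      using p'(2) \<open>(p', p'') \<in> R\<close> by blast
  qed
  then show ?thesis
    using p'(1) unfolding M_def by auto
qed

lemma pruned_trace_dominates:
  assumes "nba_wf A" "irrefl R" "trans R" "R \<subseteq> bw_di A" "init_trace A n w ps"
  shows "\<exists>qs. init_trace (prune A (prel A R Id)) n w qs \<and> qs n = ps n
           \<and> (\<forall>i\<le>n. ps i \<in> acc A \<longrightarrow> qs i \<in> acc A)"
  using assms(5)
proof (induction n arbitrary: ps)
  case 0
  then show ?case by (auto simp: init_trace_def)
next
  case (Suc n)
  have ps_n: "init_trace A n w ps"
    using Suc.prems unfolding init_trace_def by simp
  have "(ps n, w n, ps (Suc n)) \<in> delta A"
    using Suc.prems unfolding init_trace_def by simp
  then obtain p' where "(ps n, p') \<in> R\<^sup>="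
    and unpruned: "(p', w n, ps (Suc n)) \<in> delta (prune A (prel A R Id))"
    using unpruned_transition_above[OF assms(1-3)] by blast
  then have "(ps n, p') \<in> bw_di A"
    using assms(4) by (auto intro: bw_di_refl)
  then obtain qs where qs: "init_trace A n w qs" "qs n = p'"
    "\<forall>i\<le>n. ps i \<in> acc A \<longrightarrow> qs i \<in> acc A"
    using bw_diD[OF _ ps_n refl] by blast
  obtain qs' where qs': "init_trace (prune A (prel A R Id)) n w qs'" "qs' n = p'"
    "\<forall>i\<le>n. qs i \<in> acc A \<longrightarrow> qs' i \<in> acc A"
    using Suc.IH[OF qs(1)] qs(2) by auto
  have "init_trace (prune A (prel A R Id)) (Suc n) w (qs'(Suc n := ps (Suc n)))"
    using init_trace_extend[OF qs'(1)] qs'(2) unpruned by simp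
  moreover have "\<forall>i\<le>Suc n. ps i \<in> acc A \<longrightarrow> (qs'(Suc n := ps (Suc n))) i \<in> acc A"
    using qs(3) qs'(3) by (auto simp: le_Suc_eq)
  moreover have "(qs'(Suc n := ps (Suc n))) (Suc n) = ps (Suc n)"
    by simp
  ultimately show ?case by blast
qed

lemma lang_prune_prel_Id:
  assumes "nba_wf A" "irrefl R" "trans R" "R \<subseteq> bw_di A"
  shows "lang (prune A (prel A R Id)) = lang A"
proof
  show "lang (prune A (prel A R Id)) \<subseteq> lang A"
    by (rule lang_prune_subset)
next
  show "lang A \<subseteq> lang (prune A (prel A R Id))"
  proof
    fix w assume "w \<in> lang A"
    then obtain r where r: "r 0 \<in> init A" "\<forall>i. (r i, w i, r (Suc i)) \<in> delta A"
      "\<exists>\<^sub>\<infinity>i. r i \<in> acc A"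
      unfolding lang_def by blast
    let ?A' = "prune A (prel A R Id)"
    define good where "good n qs \<longleftrightarrow> init_trace ?A' n w qs \<and> (\<forall>i\<le>n. r i \<in> acc A \<longrightarrow> qs i \<in> acc A)"
      for n qs
    have "\<exists>\<rho>. \<forall>n. good n \<rho>"
    proof (rule koenig_limit[of "states A"])
      show "finite (states A)"
        using \<open>nba_wf A\<close> unfolding nba_wf_def by blast
      show "\<exists>qs. good n qs" for n
      proof -
        have "init_trace A n w r"
          using r(1,2) unfolding init_trace_def by simp
        then show ?thesis
          using pruned_trace_dominates[OF assms] unfolding good_def by blast
      qed
      show "good m qs" if "good n qs" "m \<le> n" for m n qs
        using that init_trace_mono unfolding good_def by auto
      show "good n qs'" if "good n qs" "\<And>i. i \<le> n \<Longrightarrow> qs' i = qs i" for n qs qs'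
        using that init_trace_cong[of ?A' n w qs qs'] unfolding good_def by auto
      show "qs n \<in> states A" if "good (Suc n) qs" for n qs
        using that init_trace_prune init_trace_in_states[OF \<open>nba_wf A\<close>] unfolding good_def
        by blast
    qed
    then obtain \<rho> where \<rho>: "\<And>n. good n \<rho>" by blast
    have "\<rho> 0 \<in> init ?A'"
      using \<rho>[of 0] unfolding good_def init_trace_def by blast
    moreover have "(\<rho> i, w i, \<rho> (Suc i)) \<in> delta ?A'" for i
      using \<rho>[of "Suc i"] unfolding good_def init_trace_def by blast
    moreover have "\<exists>\<^sub>\<infinity>i. \<rho> i \<in> acc ?A'"
      using r(3)
    proof (rule frequently_elim1)
      show "\<rho> i \<in> acc ?A'" if "r i \<in> acc A" for i
        using \<rho>[of i] that unfolding good_def prune_simps by blast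
    qed
    ultimately show "w \<in> lang ?A'"
      unfolding lang_def by blast
  qed
qed

theorem theorem5p2:
  fixes A :: "('a, 's) nba" and R :: "('s \<times> 's) set"
  assumes "nba_wf A"
    and "R \<subseteq> states A \<times> states A" and "irrefl R" and "trans R"
    and "R \<subseteq> bw_di A"
  shows "lang (prune A (prel A R Id)) = lang A
       \<and> lang (prune A (prel A (strict_part (bw_di A)) Id)) = lang A"
  using lang_prune_prel_Id[OF \<open>nba_wf A\<close> \<open>irrefl R\<close> \<open>trans R\<close> \<open>R \<subseteq> bw_di A\<close>]
    lang_prune_prel_Id[OF \<open>nba_wf A\<close> irrefl_strict_part trans_strict_part[OF trans_bw_di]
      strict_part_subset]
  by blast

end
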